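(* Let $A\in\mathbb{C}^{D\times D}$, let $T>0$, $t\in[0,T]$, and $u_0\in\mathbb{C}^D$. Suppose $A$ admits the Cartesian decomposition $$A=L+iH,\qquad L\equiv\frac{A+A^\dagger}{2}\succeq 0,\qquad H\equiv\frac{A-A^\dagger}{2i}.$$ Then the solution $\ket{u(t)}=e^{-At}\ket{u_0}$ of $\frac{\mathrm{d}u}{\mathrm{d}t}=-Au$, $u(0)=u_0$, admits the continuous-discrete variable LCHS representation $$\ket{u(t)}=(\bra{\phi}_{\rm osc}\otimes\mathbb I_q)\,e^{-it(\hat{x}\otimes L+\mathbb I_{\rm osc}\otimes H)}\,(\ket{\psi}_{\rm osc}\otimes\ket{u_0}_q),$$ where the oscillator states $\ket{\psi}_{\rm osc}=\int_{\mathbb R}\psi(x)\ket{x}\,\mathrm{d}x$ and $\ket{\phi}_{\rm osc}=\int_{\mathbb R}\phi(x)\ket{x}\,\mathrm{d}x$ satisfy $$\phi^*(x)\psi(x)=\frac{f(x)}{1-ix}\equiv g(x)\quad\text{for all }x\in\mathbb R,$$ with $f$ an LCHS kernel function.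
   Context: The oscillator is a single bosonic mode with Hilbert space $L^2(\mathbb R)$; $\hat x$ is its position quadrature with generalized eigenbasis $\{\ket{x}\}_{x\in\mathbb R}$, $\hat x=\int_{\mathbb R}x\ket{x}\bra{x}\,\mathrm{d}x$, $\braket{x'|x}=\delta(x-x')$. The qubit register is $\mathbb{C}^D$ and $\mathbb I_q$, $\mathbb I_{\rm osc}$ denote identities. An LCHS kernel function $f$ (in the sense of the linear combination of Hamiltonian simulation method) is a function on $\mathbb R$ such that, with $g(k)=f(k)/(1-ik)$, the identity $e^{-t(L+iH)}=\int_{\mathbb R}g(k)\,e^{-it(kL+H)}\,\mathrm{d}k$ holds for all Hermitian $L\succeq0$, Hermitian $H$, and $t\ge0$; an example is $g(k)=\frac{e^{2^\beta}}{2\pi(1-ik)e^{(1+ik)^\beta}}$ with $\beta\in(0,1)$ (principal branch). *)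

theory Defs
  imports "HOL-Analysis.Analysis"
begin

(* Complex D x D matrices are rendered as complex^'n^'n (D = CARD('n)). *)

definition cscaleM :: "complex \<Rightarrow> complex^'n^'m \<Rightarrow> complex^'n^'m" where
  "cscaleM c M = (\<chi> i j. c * M$i$j)"

definition mat_adj :: "complex^'n^'n \<Rightarrow> complex^'n^'n" where
  "mat_adj M = (\<chi> i j. cnj (M$j$i))"

definition hermitian_mat :: "complex^'n^'n \<Rightarrow> bool" where
  "hermitian_mat M \<longleftrightarrow> mat_adj M = M"

definition psd_mat :: "complex^'n^'n \<Rightarrow> bool" where
  "psd_mat M \<longleftrightarrow> hermitian_mat M \<and>
     (\<forall>v::complex^'n. 0 \<le> Re (\<Sum>i\<in>UNIV. cnj (v$i) * (M *v v)$i))"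

primrec mpow :: "complex^'n^'n \<Rightarrow> nat \<Rightarrow> complex^'n^'n" where
  "mpow M 0 = mat 1"
| "mpow M (Suc k) = M ** mpow M k"

definition mexp :: "complex^'n^'n \<Rightarrow> complex^'n^'n" where
  "mexp M = (\<Sum>k. (1 / fact k) *\<^sub>R mpow M k)"

definition lchs_kernel :: "'n::finite itself \<Rightarrow> (real \<Rightarrow> complex) \<Rightarrow> bool" where
  "lchs_kernel _ f \<longleftrightarrow>
     (\<forall>(L::complex^'n^'n) (H::complex^'n^'n) (t::real).
        psd_mat L \<longrightarrow> hermitian_mat H \<longrightarrow> t \<ge> 0 \<longrightarrow>
        has_bochner_integral lborel
          (\<lambda>k. cscaleM (f k / (1 - \<i> * complex_of_real k))
                  (mexp (cscaleM (- \<i> * complex_of_real t)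
                            (cscaleM (complex_of_real k) L + H))))
          (mexp (cscaleM (- complex_of_real t) (L + cscaleM \<i> H))))"

(* States of the hybrid system L^2(R) \<otimes> C^D are represented as functions R \<Rightarrow> C^D. *)

definition ket_tensor :: "(real \<Rightarrow> complex) \<Rightarrow> complex^'n \<Rightarrow> (real \<Rightarrow> complex^'n)" where
  "ket_tensor \<psi> u = (\<lambda>x. \<psi> x *s u)"

(* e^{-it(x\<^sup>\<and> \<otimes> L + I_osc \<otimes> H)}: since x\<^sup>\<and> = \<integral> x |x><x| dx, it acts on the fibre over x
   as the matrix e^{-it(xL+H)} *)
definition hybrid_evolution ::
  "real \<Rightarrow> complex^'n^'n \<Rightarrow> complex^'n^'n \<Rightarrow> (real \<Rightarrow> complex^'n) \<Rightarrow> (real \<Rightarrow> complex^'n)" where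
  "hybrid_evolution t L H \<Psi> =
     (\<lambda>x. mexp (cscaleM (- \<i> * complex_of_real t) (cscaleM (complex_of_real x) L + H)) *v \<Psi> x)"

definition bra_osc_apply :: "(real \<Rightarrow> complex) \<Rightarrow> (real \<Rightarrow> complex^'n) \<Rightarrow> complex^'n" where
  "bra_osc_apply \<phi> \<Psi> = (\<integral>x. cnj (\<phi> x) *s \<Psi> x \<partial>lborel)"

definition square_integrable :: "(real \<Rightarrow> complex) \<Rightarrow> bool" where
  "square_integrable \<psi> \<longleftrightarrow> \<psi> \<in> borel_measurable lborel \<and> integrable lborel (\<lambda>x. (cmod (\<psi> x))\<^sup>2)"

end

theory Submission
  imports Defs
begin

text \<open>The generator \<open>x \<otimes> L + I \<otimes> H\<close> acts on the fibre over \<open>x\<close> as \<open>xL + H\<close>, so applying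
  \<open>\<langle>\<phi>| \<otimes> I\<close> to the evolved state \<open>|\<psi>\<rangle> \<otimes> |u\<^sub>0\<rangle>\<close> integrates
  \<open>\<phi>\<^sup>*(x) \<psi>(x) exp(-it(xL + H)) u\<^sub>0\<close> over \<open>x\<close>. The overlap condition turns the weight into the
  kernel \<open>g\<close>, and the result is the LCHS identity for \<open>A = L + iH\<close> applied to \<open>u\<^sub>0\<close>. Only the
  pointwise product \<open>\<phi>\<^sup>*\<psi>\<close> enters.\<close>

lemma matrix_vector_mult_bounded_linear_left:
  "bounded_linear (\<lambda>M::'a::{real_algebra_1,euclidean_space}^'n^'m. M *v u)"
proof -
  have "linear (\<lambda>M::'a^'n^'m. M *v u)"
  proof (rule linearI)
    fix M N :: "'a^'n^'m"
    show "(M + N) *v u = M *v u + N *v u"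
      by (rule matrix_vector_mult_add_rdistrib)
  next
    fix r :: real and M :: "'a^'n^'m"
    show "(r *\<^sub>R M) *v u = r *\<^sub>R (M *v u)"
      by (simp add: vec_eq_iff matrix_vector_mult_def scaleR_sum_right)
  qed
  then show ?thesis
    by (simp add: linear_conv_bounded_linear)
qed

lemma cscaleM_matrix_vector_mult: "cscaleM c M *v v = c *s (M *v v)"
  by (simp add: vec_eq_iff cscaleM_def matrix_vector_mult_def sum_distrib_left mult.assoc)

lemma hermitian_mat_imaginary_part:
  "hermitian_mat (cscaleM (1 / (2 * \<i>)) (A - mat_adj A))"
  unfolding hermitian_mat_def
  by (simp add: vec_eq_iff mat_adj_def cscaleM_def field_simps)

lemma cartesian_decomposition:
  "cscaleM (1/2) (A + mat_adj A) + cscaleM \<i> (cscaleM (1 / (2 * \<i>)) (A - mat_adj A)) = A"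
  by (simp add: vec_eq_iff mat_adj_def cscaleM_def field_simps)

lemma lchs_kernel_matrix_vector_mult:
  assumes "lchs_kernel TYPE('n::finite) f" and "psd_mat L" and "hermitian_mat H" and "0 \<le> t"
  shows "has_bochner_integral lborel
           (\<lambda>k. (f k / (1 - \<i> * complex_of_real k)) *s
                (mexp (cscaleM (- \<i> * complex_of_real t) (cscaleM (complex_of_real k) L + H)) *v u))
           (mexp (cscaleM (- complex_of_real t) (L + cscaleM \<i> H)) *v (u::complex^'n))"
proof -
  have "has_bochner_integral lborel
          (\<lambda>k. cscaleM (f k / (1 - \<i> * complex_of_real k))
                 (mexp (cscaleM (- \<i> * complex_of_real t) (cscaleM (complex_of_real k) L + H))))
          (mexp (cscaleM (- complex_of_real t) (L + cscaleM \<i> H)))"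
    using assms unfolding lchs_kernel_def by blast
  from has_bochner_integral_bounded_linear[OF matrix_vector_mult_bounded_linear_left this]
  show ?thesis
    by (simp add: cscaleM_matrix_vector_mult)
qed

lemma bra_integrand_hybrid_evolution_ket_tensor:
  "cnj (\<phi> x) *s hybrid_evolution t L H (ket_tensor \<psi> u) x
     = (cnj (\<phi> x) * \<psi> x) *s
       (mexp (cscaleM (- \<i> * complex_of_real t) (cscaleM (complex_of_real x) L + H)) *v u)"
  by (simp add: hybrid_evolution_def ket_tensor_def vector_scalar_commute)

theorem theorem1:
  fixes A L H :: "complex^'n^'n"
    and T t :: real
    and u0 :: "complex^'n"
    and \<psi> \<phi> :: "real \<Rightarrow> complex"
    and f :: "real \<Rightarrow> complex"
  assumes "T > 0" and "0 \<le> t" and "t \<le> T"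
    and L_def: "L = cscaleM (1/2) (A + mat_adj A)"
    and H_def: "H = cscaleM (1 / (2 * \<i>)) (A - mat_adj A)"
    and L_psd: "psd_mat L"
    and kernel: "lchs_kernel TYPE('n) f"
    and psi_L2: "square_integrable \<psi>"
    and phi_L2: "square_integrable \<phi>"
    and overlap: "\<forall>x::real. cnj (\<phi> x) * \<psi> x = f x / (1 - \<i> * complex_of_real x)"
  shows "integrable lborel
           (\<lambda>x. cnj (\<phi> x) *s hybrid_evolution t L H (ket_tensor \<psi> u0) x)
       \<and> mexp (cscaleM (- complex_of_real t) A) *v u0
           = bra_osc_apply \<phi> (hybrid_evolution t L H (ket_tensor \<psi> u0))"
proof -
  have "hermitian_mat H" and "L + cscaleM \<i> H = A"
    unfolding L_def H_def by (rule hermitian_mat_imaginary_part, rule cartesian_decomposition)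
  with lchs_kernel_matrix_vector_mult[OF kernel L_psd _ \<open>0 \<le> t\<close>, of H u0]
  have "has_bochner_integral lborel
          (\<lambda>x. cnj (\<phi> x) *s hybrid_evolution t L H (ket_tensor \<psi> u0) x)
          (mexp (cscaleM (- complex_of_real t) A) *v u0)"
    by (simp add: bra_integrand_hybrid_evolution_ket_tensor overlap)
  then show ?thesis
    unfolding bra_osc_apply_def by (simp add: has_bochner_integral_iff)
qed

end
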